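(* Let $n,N\in\mathbb N$, $I=\{1,\dots,n\}$, $J=\{1,\dots,N\}$, $G$ a nonempty finite set of maps $I\to J$ with normalized counting measure $\mathbb P$ and expectation $\mathbb E$, such that $\mathbb P(\{g\in G:g(i)=j\})=1/N$ for all $i\in I$, $j\in J$. Let $a\in\mathbb R^{n\times N}$. Then for every integer $1\le\ell\le n$, $$\mathbb E\sum_{k=1}^{\ell}\operatorname{k\text{-}max}_{1\le i\le n}|a_{ig(i)}|\le\frac2N\|a\|_{M_{\ell N}},$$ where $a$ is regarded as a vector in $\mathbb R^{nN}$ and $M_{\ell N}(t)=0$ for $0\le t\le 1/(\ell N)$, $M_{\ell N}(t)=t-1/(\ell N)$ for $t>1/(\ell N)$.
   Context: $\mathbb P(E)=|E|/|G|$ for $E\subseteq G$. For a vector $x$ with non-negative entries, $\operatorname{k\text{-}max}_{1\le i\le n}x_i$ denotes its $k$-th largest entry counted with multiplicity. For an Orlicz function $M$ (a convex, non-constant function $M:[0,\infty)\to[0,\infty)$ with $M(0)=0$), the Luxemburg norm on $\mathbb R^m$ is $\|x\|_M=\inf\{\lambda>0:\sum_{i=1}^mM(|x_i|/\lambda)\le1\}$. *)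

theory Defs
  imports "HOL-Analysis.Analysis" "HOL-Library.FuncSet"
begin

definition kmax :: "nat \<Rightarrow> real list \<Rightarrow> real" where
  "kmax k xs = rev (sort xs) ! (k - 1)"

definition luxemburg_norm :: "(real \<Rightarrow> real) \<Rightarrow> 'i set \<Rightarrow> ('i \<Rightarrow> real) \<Rightarrow> real" where
  "luxemburg_norm M S x = Inf {c. c > 0 \<and> (\<Sum>i\<in>S. M (\<bar>x i\<bar> / c)) \<le> 1}"

definition M_orl :: "nat \<Rightarrow> real \<Rightarrow> real" where
  "M_orl m t = (if t \<le> 1 / real m then 0 else t - 1 / real m)"

end

theory Submission imports Defs begin

text \<open>For every threshold d, the sum of the l largest entries of a vector x is at most
  l d + sum_i max 0 (x_i - d). Averaging over g with uniform marginals turns the second term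
  into (1/N) sum_(i,j) max 0 (|a_ij| - d). For d = c/(lN), with c an admissible level of the
  Luxemburg norm, that double sum equals c sum_(i,j) M_lN(|a_ij|/c) \<le> c, so the expectation is at
  most 2c/N; the infimum over c gives the claim.\<close>

lemma sum_kmax_le_threshold:
  fixes xs :: "real list" and d :: real
  assumes "l \<le> length xs"
  shows "(\<Sum>k=1..l. kmax k xs) \<le> real l * d + sum_list (map (\<lambda>y. max 0 (y - d)) xs)"
proof -
  define ys where "ys = rev (sort xs)"
  define f where "f = (\<lambda>y::real. max 0 (y - d))"
  have "(\<Sum>k=1..l. kmax k xs) = (\<Sum>k<l. ys ! k)"
  proof -
    have "(\<Sum>k=1..l. kmax k xs) = (\<Sum>k\<in>Suc ` {..<l}. ys ! (k - 1))"
      by (simp add: kmax_def ys_def image_Suc_lessThan)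
    also have "\<dots> = (\<Sum>k<l. ys ! k)"
      by (simp add: sum.reindex)
    finally show ?thesis .
  qed
  also have "\<dots> \<le> (\<Sum>k<l. d + f (ys ! k))"
    by (rule sum_mono) (simp add: f_def)
  also have "\<dots> = real l * d + (\<Sum>k<l. f (ys ! k))"
    by (simp add: sum.distrib)
  also have "(\<Sum>k<l. f (ys ! k)) \<le> (\<Sum>k<length ys. f (ys ! k))"
    by (rule sum_mono2) (use assms in \<open>auto simp: f_def ys_def\<close>)
  also have "\<dots> = sum_list (map f ys)"
    by (simp add: sum_list_sum_nth atLeast0LessThan)
  also have "\<dots> = sum_list (map f xs)"
    by (metis mset_map mset_rev mset_sort sum_mset_sum_list ys_def)
  finally show ?thesis
    by (simp add: f_def)
qed

lemma sum_comp_uniform_marginals: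
  fixes G :: "('a \<Rightarrow> 'b) set" and h :: "'a \<Rightarrow> 'b \<Rightarrow> real"
  assumes "finite G" "finite J" "G \<subseteq> I \<rightarrow> J"
    and marginal: "\<And>i j. i \<in> I \<Longrightarrow> j \<in> J \<Longrightarrow> real (card {g\<in>G. g i = j}) = p"
  shows "(\<Sum>g\<in>G. \<Sum>i\<in>I. h i (g i)) = p * (\<Sum>i\<in>I. \<Sum>j\<in>J. h i j)"
proof -
  have per_coordinate: "(\<Sum>g\<in>G. h i (g i)) = p * (\<Sum>j\<in>J. h i j)" if i: "i \<in> I" for i
  proof -
    have "(\<Sum>g\<in>G. h i (g i)) = (\<Sum>j\<in>J. \<Sum>g\<in>{g\<in>G. g i = j}. h i (g i))"
      by (rule sum.group[symmetric]) (use assms i in auto)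
    also have "\<dots> = (\<Sum>j\<in>J. real (card {g\<in>G. g i = j}) * h i j)"
      by simp
    also have "\<dots> = p * (\<Sum>j\<in>J. h i j)"
      by (simp add: marginal i sum_distrib_left)
    finally show ?thesis .
  qed
  have "(\<Sum>g\<in>G. \<Sum>i\<in>I. h i (g i)) = (\<Sum>i\<in>I. \<Sum>g\<in>G. h i (g i))"
    by (rule sum.swap)
  also have "\<dots> = (\<Sum>i\<in>I. p * (\<Sum>j\<in>J. h i j))"
    by (rule sum.cong) (simp_all add: per_coordinate)
  finally show ?thesis
    by (simp add: sum_distrib_left)
qed

lemma mult_M_orl_divide:
  assumes "c > 0" "m > 0"
  shows "c * M_orl m (t / c) = max 0 (t - c / real m)"
  using assms by (auto simp: M_orl_def field_simps)

lemma M_orl_luxemburg_feasible: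
  fixes x :: "'i \<Rightarrow> real"
  assumes "finite S" "m > 0"
  shows "\<exists>c>0. (\<Sum>i\<in>S. M_orl m (\<bar>x i\<bar> / c)) \<le> 1"
proof -
  define c where "c = real m * (1 + (\<Sum>i\<in>S. \<bar>x i\<bar>))"
  have c: "c > 0"
    using assms by (simp add: c_def add_pos_nonneg sum_nonneg)
  have "M_orl m (\<bar>x i\<bar> / c) = 0" if "i \<in> S" for i
  proof -
    have "\<bar>x i\<bar> \<le> (\<Sum>i\<in>S. \<bar>x i\<bar>)"
      by (rule member_le_sum) (use assms that in auto)
    then have "real m * \<bar>x i\<bar> \<le> c"
      unfolding c_def by (intro mult_left_mono) auto
    then have "\<bar>x i\<bar> / c \<le> 1 / real m"
      using c assms by (simp add: field_simps)
    then show ?thesis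
      by (simp add: M_orl_def)
  qed
  then show ?thesis
    using c by auto
qed

lemma le_luxemburg_norm:
  assumes "\<exists>c>0. (\<Sum>i\<in>S. M (\<bar>x i\<bar> / c)) \<le> 1"
    and "\<And>c. c > 0 \<Longrightarrow> (\<Sum>i\<in>S. M (\<bar>x i\<bar> / c)) \<le> 1 \<Longrightarrow> y \<le> c"
  shows "y \<le> luxemburg_norm M S x"
  unfolding luxemburg_norm_def using assms by (intro cInf_greatest) auto

lemma sum_top_kmax_le_admissible_level:
  fixes G :: "(nat \<Rightarrow> 'b) set" and a :: "nat \<Rightarrow> 'b \<Rightarrow> real"
  assumes "finite G" "finite J" "G \<subseteq> {1..n} \<rightarrow> J"
    and marginal: "\<And>i j. i \<in> {1..n} \<Longrightarrow> j \<in> J \<Longrightarrow> real (card {g\<in>G. g i = j}) = real (card G) / real N"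
    and "1 \<le> l" "l \<le> n" "N > 0" "c > 0"
    and admissible: "(\<Sum>x\<in>{1..n} \<times> J. M_orl (l * N) (\<bar>(\<lambda>(i,j). a i j) x\<bar> / c)) \<le> 1"
  shows "(\<Sum>g\<in>G. \<Sum>k=1..l. kmax k (map (\<lambda>i. \<bar>a i (g i)\<bar>) [1..<n+1]))
           \<le> real (card G) * (2 / real N * c)"
proof -
  define d where "d = c / real (l * N)"
  define h where "h = (\<lambda>i j. max 0 (\<bar>a i j\<bar> - d))"
  have ld: "real l * d = c / real N"
    using assms by (simp add: d_def)
  have top_sum: "(\<Sum>k=1..l. kmax k (map (\<lambda>i. \<bar>a i (g i)\<bar>) [1..<n+1]))
      \<le> real l * d + (\<Sum>i\<in>{1..n}. h i (g i))" for g
  proof -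
    have "sum_list (map (\<lambda>y. max 0 (y - d)) (map (\<lambda>i. \<bar>a i (g i)\<bar>) [1..<n+1]))
        = (\<Sum>i\<in>set [1..<n+1]. h i (g i))"
      by (simp only: map_map comp_def h_def sum_set_upt_conv_sum_list_nat)
    also have "set [1..<n+1] = {1..n}"
      by auto
    finally show ?thesis
      using sum_kmax_le_threshold[of l "map (\<lambda>i. \<bar>a i (g i)\<bar>) [1..<n+1]" d] \<open>l \<le> n\<close>
      by simp
  qed
  have "(\<Sum>i\<in>{1..n}. \<Sum>j\<in>J. h i j) = c * (\<Sum>x\<in>{1..n} \<times> J. M_orl (l * N) (\<bar>(\<lambda>(i,j). a i j) x\<bar> / c))"
    using assms by (simp add: h_def d_def mult_M_orl_divide sum.cartesian_product sum_distrib_left case_prod_unfold)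
  also have "\<dots> \<le> c"
    using admissible \<open>c > 0\<close> by (simp add: mult_left_le)
  finally have h_total: "(\<Sum>i\<in>{1..n}. \<Sum>j\<in>J. h i j) \<le> c" .
  have "(\<Sum>g\<in>G. \<Sum>k=1..l. kmax k (map (\<lambda>i. \<bar>a i (g i)\<bar>) [1..<n+1]))
      \<le> (\<Sum>g\<in>G. real l * d + (\<Sum>i\<in>{1..n}. h i (g i)))"
    by (rule sum_mono) (rule top_sum)
  also have "\<dots> = real (card G) * (c / real N + (\<Sum>i\<in>{1..n}. \<Sum>j\<in>J. h i j) / real N)"
    using sum_comp_uniform_marginals[OF assms(1-3) marginal, of h]
    by (simp add: sum.distrib flip: ld) (simp add: algebra_simps)
  also have "\<dots> \<le> real (card G) * (2 / real N * c)"
    using h_total \<open>N > 0\<close> by (intro mult_left_mono) (auto simp: field_simps)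
  finally show ?thesis .
qed

theorem proposition4p2:
  fixes n N l :: nat and G :: "(nat \<Rightarrow> nat) set" and a :: "nat \<Rightarrow> nat \<Rightarrow> real"
  assumes G_sub: "G \<subseteq> {1..n} \<rightarrow>\<^sub>E {1..N}"
    and G_ne: "G \<noteq> {}"
    and G_fin: "finite G"
    and unif: "\<forall>i\<in>{1..n}. \<forall>j\<in>{1..N}.
                 real (card {g\<in>G. g i = j}) / real (card G) = 1 / real N"
    and l: "1 \<le> l" "l \<le> n"
  shows "(1 / real (card G)) *
           (\<Sum>g\<in>G. \<Sum>k=1..l. kmax k (map (\<lambda>i. \<bar>a i (g i)\<bar>) [1..<n+1]))
         \<le> 2 / real N * luxemburg_norm (M_orl (l * N)) ({1..n} \<times> {1..N}) (\<lambda>(i,j). a i j)"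
proof -
  let ?E = "(\<Sum>g\<in>G. \<Sum>k=1..l. kmax k (map (\<lambda>i. \<bar>a i (g i)\<bar>) [1..<n+1]))"
  have G_card: "real (card G) > 0"
    using G_ne G_fin by (simp add: card_gt_0_iff)
  have "N > 0"
    using G_sub G_ne l by (fastforce simp: PiE_def Pi_def)
  have marginal: "real (card {g\<in>G. g i = j}) = real (card G) / real N"
    if "i \<in> {1..n}" "j \<in> {1..N}" for i j
    using unif that G_card by (auto simp: field_simps)
  have "?E * real N / (2 * real (card G))
      \<le> luxemburg_norm (M_orl (l * N)) ({1..n} \<times> {1..N}) (\<lambda>(i,j). a i j)"
  proof (rule le_luxemburg_norm)
    show "\<exists>c>0. (\<Sum>x\<in>{1..n} \<times> {1..N}. M_orl (l * N) (\<bar>(\<lambda>(i,j). a i j) x\<bar> / c)) \<le> 1"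
      using l \<open>N > 0\<close> by (intro M_orl_luxemburg_feasible) auto
  next
    fix c :: real
    assume "c > 0" "(\<Sum>x\<in>{1..n} \<times> {1..N}. M_orl (l * N) (\<bar>(\<lambda>(i,j). a i j) x\<bar> / c)) \<le> 1"
    from sum_top_kmax_le_admissible_level[OF G_fin _ _ marginal l \<open>N > 0\<close> this] G_sub
    show "?E * real N / (2 * real (card G)) \<le> c"
      using G_card \<open>N > 0\<close> by (auto simp: field_simps PiE_def)
  qed
  then show ?thesis
    using G_card \<open>N > 0\<close> by (simp add: field_simps)
qed

end
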